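(* Let $\mathscr{C}$ be an apex-minor-free class of graphs. There exists a constant $\nu_{\mathscr{C}}>0$ depending only on $\mathscr{C}$ such that for every $G\in\mathscr{C}$ and every nonempty $X\subseteq V(G)$, $$\left|\{N(C)\colon C\in \mathrm{cc}(G\setminus X)\}\right|\le \nu_{\mathscr{C}}\cdot |X|.$$
   Context: A class $\mathscr{C}$ is apex-minor-free if it is minor-closed and excludes some fixed apex graph (a graph that becomes planar after deleting one vertex) as a minor. $\mathrm{cc}(G\setminus X)$ denotes the set of (vertex sets of) connected components of the graph $G\setminus X$ obtained by deleting $X$, and for a vertex set $C$, $N(C)$ denotes the set of vertices outside $C$ adjacent to some vertex of $C$. *)

theory Defs
  imports "HOL-Analysis.Analysis"
begin

type_synonym graph = "nat set \<times> nat set set"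

definition verts :: "graph \<Rightarrow> nat set" where "verts G = fst G"
definition edges :: "graph \<Rightarrow> nat set set" where "edges G = snd G"

definition wf_graph :: "graph \<Rightarrow> bool" where
  "wf_graph G \<longleftrightarrow> finite (verts G) \<and>
     (\<forall>e\<in>edges G. e \<subseteq> verts G \<and> card e = 2)"

definition adj :: "graph \<Rightarrow> (nat \<times> nat) set" where
  "adj G = {(u, v). {u, v} \<in> edges G}"

definition delete_verts :: "graph \<Rightarrow> nat set \<Rightarrow> graph" where
  "delete_verts G X = (verts G - X, {e \<in> edges G. e \<inter> X = {}})"

definition connected_set :: "graph \<Rightarrow> nat set \<Rightarrow> bool" where
  "connected_set G S \<longleftrightarrow> S \<noteq> {} \<and> S \<subseteq> verts G \<and>
     (\<forall>u\<in>S. \<forall>v\<in>S. (u, v) \<in> (adj G \<inter> (S \<times> S))\<^sup>*)"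

definition cc :: "graph \<Rightarrow> nat set set" where
  "cc G = {{v. (u, v) \<in> (adj G)\<^sup>*} | u. u \<in> verts G}"

definition nbh :: "graph \<Rightarrow> nat set \<Rightarrow> nat set" where
  "nbh G C = {v \<in> verts G - C. \<exists>c\<in>C. {c, v} \<in> edges G}"

definition minor :: "graph \<Rightarrow> graph \<Rightarrow> bool" where
  "minor H G \<longleftrightarrow> (\<exists>\<phi> :: nat \<Rightarrow> nat set.
     (\<forall>v\<in>verts H. connected_set G (\<phi> v)) \<and>
     (\<forall>u\<in>verts H. \<forall>v\<in>verts H. u \<noteq> v \<longrightarrow> \<phi> u \<inter> \<phi> v = {}) \<and>
     (\<forall>u v. {u, v} \<in> edges H \<longrightarrow> (\<exists>x\<in>\<phi> u. \<exists>y\<in>\<phi> v. {x, y} \<in> edges G)))"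

definition planar :: "graph \<Rightarrow> bool" where
  "planar G \<longleftrightarrow> (\<exists>(f :: nat \<Rightarrow> complex) (\<gamma> :: nat set \<Rightarrow> real \<Rightarrow> complex).
     inj_on f (verts G) \<and>
     (\<forall>e\<in>edges G. arc (\<gamma> e) \<and> {pathstart (\<gamma> e), pathfinish (\<gamma> e)} = f ` e \<and>
        path_image (\<gamma> e) \<inter> f ` verts G = f ` e) \<and>
     (\<forall>e\<in>edges G. \<forall>e'\<in>edges G. e \<noteq> e' \<longrightarrow>
        path_image (\<gamma> e) \<inter> path_image (\<gamma> e') \<subseteq> f ` (e \<inter> e')))"

definition apex :: "graph \<Rightarrow> bool" where
  "apex G \<longleftrightarrow> (\<exists>v\<in>verts G. planar (delete_verts G {v}))"

definition minor_closed :: "graph set \<Rightarrow> bool" where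
  "minor_closed \<C> \<longleftrightarrow> (\<forall>G\<in>\<C>. \<forall>H. wf_graph H \<and> minor H G \<longrightarrow> H \<in> \<C>)"

definition apex_minor_free :: "graph set \<Rightarrow> bool" where
  "apex_minor_free \<C> \<longleftrightarrow> (\<forall>G\<in>\<C>. wf_graph G) \<and> minor_closed \<C> \<and>
     (\<exists>A. wf_graph A \<and> apex A \<and> (\<forall>G\<in>\<C>. \<not> minor A G))"

end

theory Submission
  imports Defs
begin

text \<open>By a Mader-type argument every minor of \<open>G\<close> has at most \<open>c |V|\<close> edges, \<open>c = 2\<^bsup>|A|\<^esup>\<close>. Pick one
  component of \<open>G - X\<close> for each distinct neighbourhood, contract it to a vertex, and delete the
  rest of \<open>G - X\<close>: this minor has \<open>X\<close> plus one new vertex per neighbourhood, attached exactly to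
  that neighbourhood. While some new vertex has two non-adjacent neighbours, contracting it onto
  one of them trades the vertex for an edge inside \<open>X\<close>; the remaining new vertices have clique
  neighbourhoods. Hence the number of neighbourhoods is at most the number of edges inside \<open>X\<close>
  (at most \<open>c |X|\<close>) plus the number of cliques of a graph on \<open>X\<close> of degeneracy \<open>2c\<close>
  (at most \<open>2\<^bsup>2c+1\<^esup> |X| + 1\<close>).\<close>

definition neighbours :: "graph \<Rightarrow> nat \<Rightarrow> nat set" where
  "neighbours H v = {w. {v, w} \<in> edges H}"

definition induced_subgraph :: "graph \<Rightarrow> nat set \<Rightarrow> graph" where
  "induced_subgraph H S = (S, {e \<in> edges H. e \<subseteq> S})"

definition contract_edge :: "graph \<Rightarrow> nat \<Rightarrow> nat \<Rightarrow> graph" where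
  "contract_edge H x y =
     (verts H - {y}, {e \<in> edges H. y \<notin> e} \<union> {{x, w} | w. {y, w} \<in> edges H \<and> w \<noteq> x})"

definition complete_graph :: "nat \<Rightarrow> graph" where
  "complete_graph n = ({0..<n}, {{i, j} | i j. i < n \<and> j < n \<and> i \<noteq> j})"

lemma sym_adj: "sym (adj G)"
  by (auto simp: sym_def adj_def insert_commute)

lemma wf_graph_finite_verts: "wf_graph G \<Longrightarrow> finite (verts G)"
  by (simp add: wf_graph_def)

lemma wf_graph_finite_edges: "wf_graph G \<Longrightarrow> finite (edges G)"
  unfolding wf_graph_def by (meson Pow_iff finite_Pow_iff finite_subset subsetI)

lemma wf_graph_edgeD:
  assumes "wf_graph G" "{u, v} \<in> edges G"
  shows "u \<in> verts G" "v \<in> verts G" "u \<noteq> v"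
proof -
  have "{u, v} \<subseteq> verts G" "card {u, v} = 2" using assms unfolding wf_graph_def by auto
  then show "u \<in> verts G" "v \<in> verts G" "u \<noteq> v" by (auto simp: card_2_iff doubleton_eq_iff)
qed

lemma wf_graph_edgeE:
  assumes "wf_graph G" "e \<in> edges G"
  obtains u v where "e = {u, v}" "u \<noteq> v"
  using assms unfolding wf_graph_def by (metis card_2_iff)

lemma neighbours_subset: "wf_graph H \<Longrightarrow> neighbours H v \<subseteq> verts H"
  unfolding neighbours_def using wf_graph_edgeD by blast

lemma finite_neighbours: "wf_graph H \<Longrightarrow> finite (neighbours H v)"
  using neighbours_subset wf_graph_finite_verts finite_subset by blast

lemma not_in_neighbours: "wf_graph H \<Longrightarrow> v \<notin> neighbours H v"
  unfolding neighbours_def using wf_graph_edgeD by blast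

lemma neighbours_induced_subgraph:
  "y \<in> S \<Longrightarrow> neighbours (induced_subgraph H S) y = neighbours H y \<inter> S"
  by (auto simp: neighbours_def induced_subgraph_def edges_def)

lemma card_neighbours_eq_card_incident:
  assumes "wf_graph H"
  shows "card (neighbours H v) = card {e \<in> edges H. v \<in> e}"
proof -
  have "bij_betw (\<lambda>w. {v, w}) (neighbours H v) {e \<in> edges H. v \<in> e}"
  proof (rule bij_betwI')
    fix a b assume "a \<in> neighbours H v" "b \<in> neighbours H v"
    then show "({v, a} = {v, b}) = (a = b)"
      using not_in_neighbours[OF assms] by (auto simp: doubleton_eq_iff)
  next
    fix e assume "e \<in> {e \<in> edges H. v \<in> e}"
    then obtain a b where "e = {a, b}" "e \<in> edges H" "v \<in> e"
      using wf_graph_edgeE[OF assms] by blast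
    then show "\<exists>w\<in>neighbours H v. e = {v, w}"
      unfolding neighbours_def by (auto simp: insert_commute)
  qed (auto simp: neighbours_def)
  then show ?thesis by (rule bij_betw_same_card)
qed

lemma handshake:
  assumes "wf_graph H"
  shows "(\<Sum>v\<in>verts H. card (neighbours H v)) = 2 * card (edges H)"
proof -
  have fE: "finite (edges H)" and fV: "finite (verts H)"
    using assms wf_graph_finite_edges wf_graph_finite_verts by auto
  have "(\<Sum>v\<in>verts H. card (neighbours H v)) = (\<Sum>v\<in>verts H. \<Sum>e\<in>edges H. if v \<in> e then 1 else 0)"
    using fE by (simp add: card_neighbours_eq_card_incident[OF assms] sum.If_cases Int_def conj_commute)
  also have "\<dots> = (\<Sum>e\<in>edges H. \<Sum>v\<in>verts H. if v \<in> e then 1 else 0)"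
    by (rule sum.swap)
  also have "\<dots> = (\<Sum>e\<in>edges H. card e)"
  proof (rule sum.cong)
    fix e assume "e \<in> edges H"
    then have "e \<subseteq> verts H" using assms unfolding wf_graph_def by blast
    then show "(\<Sum>v\<in>verts H. if v \<in> e then 1 else 0) = card e"
      using fV by (simp add: sum.If_cases Int_absorb1)
  qed simp
  also have "\<dots> = (\<Sum>e\<in>edges H. 2)"
    using assms unfolding wf_graph_def by (intro sum.cong) auto
  finally show ?thesis by simp
qed

lemma induced_subgraph_wf: "wf_graph H \<Longrightarrow> S \<subseteq> verts H \<Longrightarrow> wf_graph (induced_subgraph H S)"
  unfolding wf_graph_def induced_subgraph_def verts_def edges_def by (auto intro: finite_subset)

lemma contract_edge_verts: "verts (contract_edge H x y) = verts H - {y}"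
  by (simp add: contract_edge_def verts_def)

lemma contract_edge_edges:
  "edges (contract_edge H x y) =
     {e \<in> edges H. y \<notin> e} \<union> {{x, w} | w. {y, w} \<in> edges H \<and> w \<noteq> x}"
  by (simp add: contract_edge_def edges_def)

lemma contract_edge_wf:
  assumes wf: "wf_graph H" and xy: "{x, y} \<in> edges H"
  shows "wf_graph (contract_edge H x y)"
proof -
  have "e \<subseteq> verts (contract_edge H x y) \<and> card e = 2" if "e \<in> edges (contract_edge H x y)" for e
  proof -
    from that consider "e \<in> edges H" "y \<notin> e" | w where "e = {x, w}" "{y, w} \<in> edges H" "w \<noteq> x"
      unfolding contract_edge_edges by blast
    then show ?thesis
    proof cases
      case 1
      then show ?thesis using wf unfolding wf_graph_def contract_edge_verts by auto
    next
      case 2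
      then show ?thesis
        using wf_graph_edgeD[OF wf 2(2)] wf_graph_edgeD[OF wf xy] by (auto simp: contract_edge_verts)
    qed
  qed
  then show ?thesis using wf by (simp add: wf_graph_def contract_edge_verts)
qed

lemma complete_graph_verts: "verts (complete_graph n) = {0..<n}"
  by (simp add: complete_graph_def verts_def)

lemma complete_graph_edge_iff: "{u, v} \<in> edges (complete_graph n) \<longleftrightarrow> u < n \<and> v < n \<and> u \<noteq> v"
proof
  assume "{u, v} \<in> edges (complete_graph n)"
  then obtain i j where "{u, v} = {i, j}" "i < n" "j < n" "i \<noteq> j"
    by (auto simp: complete_graph_def edges_def)
  then show "u < n \<and> v < n \<and> u \<noteq> v" by (auto simp: doubleton_eq_iff)
qed (auto simp: complete_graph_def edges_def)

lemma minorI: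
  assumes "\<And>v. v \<in> verts H \<Longrightarrow> connected_set G (\<phi> v)"
    and "\<And>u v. u \<in> verts H \<Longrightarrow> v \<in> verts H \<Longrightarrow> u \<noteq> v \<Longrightarrow> \<phi> u \<inter> \<phi> v = {}"
    and "\<And>u v. {u, v} \<in> edges H \<Longrightarrow> \<exists>x\<in>\<phi> u. \<exists>y\<in>\<phi> v. {x, y} \<in> edges G"
  shows "minor H G"
  unfolding minor_def using assms by blast

lemma connected_set_singleton: "v \<in> verts G \<Longrightarrow> connected_set G {v}"
  unfolding connected_set_def by auto

lemma connected_set_mono_graph:
  assumes "connected_set G' T" "adj G' \<subseteq> adj G" "T \<subseteq> verts G"
  shows "connected_set G T"
proof -
  have "adj G' \<inter> T \<times> T \<subseteq> adj G \<inter> T \<times> T" using assms(2) by blast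
  then show ?thesis using assms rtrancl_mono unfolding connected_set_def by blast
qed

lemma adj_induced_subgraph_subset: "adj (induced_subgraph H S) \<subseteq> adj H"
  by (auto simp: adj_def induced_subgraph_def edges_def)

lemma minor_refl: "minor G G"
  by (rule minorI[where \<phi> = "\<lambda>v. {v}"]) (auto intro: connected_set_singleton)

lemma induced_subgraph_minor:
  assumes "S \<subseteq> verts H"
  shows "minor (induced_subgraph H S) H"
proof (rule minorI[where \<phi> = "\<lambda>v. {v}"])
  show "connected_set H {v}" if "v \<in> verts (induced_subgraph H S)" for v
    using that assms by (intro connected_set_singleton) (auto simp: induced_subgraph_def verts_def)
qed (auto simp: induced_subgraph_def edges_def)

lemma branch_sets_path:
  assumes conn: "\<And>v. v \<in> S \<Longrightarrow> connected_set K (\<psi> v)"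
    and edge: "\<And>u v. {u, v} \<in> edges G \<Longrightarrow> \<exists>x\<in>\<psi> u. \<exists>y\<in>\<psi> v. {x, y} \<in> edges K"
    and path: "(u, w) \<in> (adj G \<inter> S \<times> S)\<^sup>*" and "u \<in> S"
  shows "\<forall>a\<in>\<psi> u. \<forall>b\<in>\<psi> w. (a, b) \<in> (adj K \<inter> \<Union>(\<psi> ` S) \<times> \<Union>(\<psi> ` S))\<^sup>*"
  using path
proof (induction rule: rtrancl_induct)
  let ?T = "\<Union>(\<psi> ` S)"
  have inside: "(a, b) \<in> (adj K \<inter> ?T \<times> ?T)\<^sup>*" if "v \<in> S" "a \<in> \<psi> v" "b \<in> \<psi> v" for v a b
  proof -
    have "(a, b) \<in> (adj K \<inter> \<psi> v \<times> \<psi> v)\<^sup>*" using conn that unfolding connected_set_def by blast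
    moreover have "adj K \<inter> \<psi> v \<times> \<psi> v \<subseteq> adj K \<inter> ?T \<times> ?T" using \<open>v \<in> S\<close> by blast
    ultimately show ?thesis using rtrancl_mono by blast
  qed
  {
    case base
    show ?case using inside \<open>u \<in> S\<close> by blast
  next
    case (step w z)
    have wz: "{w, z} \<in> edges G" "w \<in> S" "z \<in> S" using step.hyps(2) by (auto simp: adj_def)
    obtain p q where pq: "p \<in> \<psi> w" "q \<in> \<psi> z" "{p, q} \<in> edges K" using edge[OF wz(1)] by blast
    have "(p, q) \<in> adj K \<inter> ?T \<times> ?T" using pq wz by (auto simp: adj_def)
    then show ?case using step.IH pq inside[OF wz(3)]
      by (meson rtrancl.rtrancl_into_rtrancl rtrancl_trans)
  }
qed

lemma minor_trans:
  assumes "minor H G" "minor G K"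
  shows "minor H K"
proof -
  obtain \<phi> where \<phi>: "\<forall>v\<in>verts H. connected_set G (\<phi> v)"
    "\<forall>u\<in>verts H. \<forall>v\<in>verts H. u \<noteq> v \<longrightarrow> \<phi> u \<inter> \<phi> v = {}"
    "\<forall>u v. {u, v} \<in> edges H \<longrightarrow> (\<exists>x\<in>\<phi> u. \<exists>y\<in>\<phi> v. {x, y} \<in> edges G)"
    using assms(1) unfolding minor_def by blast
  obtain \<psi> where \<psi>: "\<forall>v\<in>verts G. connected_set K (\<psi> v)"
    "\<forall>u\<in>verts G. \<forall>v\<in>verts G. u \<noteq> v \<longrightarrow> \<psi> u \<inter> \<psi> v = {}"
    "\<forall>u v. {u, v} \<in> edges G \<longrightarrow> (\<exists>x\<in>\<psi> u. \<exists>y\<in>\<psi> v. {x, y} \<in> edges K)"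
    using assms(2) unfolding minor_def by blast
  have \<phi>_verts: "\<phi> v \<noteq> {}" "\<phi> v \<subseteq> verts G" if "v \<in> verts H" for v
    using \<phi>(1) that unfolding connected_set_def by auto
  show ?thesis
  proof (rule minorI[where \<phi> = "\<lambda>v. \<Union>(\<psi> ` \<phi> v)"])
    fix v assume v: "v \<in> verts H"
    have conn: "\<And>w. w \<in> \<phi> v \<Longrightarrow> connected_set K (\<psi> w)" using \<psi>(1) \<phi>_verts[OF v] by blast
    have edge: "\<And>u w. {u, w} \<in> edges G \<Longrightarrow> \<exists>x\<in>\<psi> u. \<exists>y\<in>\<psi> w. {x, y} \<in> edges K"
      using \<psi>(3) by blast
    show "connected_set K (\<Union>(\<psi> ` \<phi> v))"
      unfolding connected_set_def
    proof (intro conjI ballI)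
      show "\<Union>(\<psi> ` \<phi> v) \<noteq> {}" "\<Union>(\<psi> ` \<phi> v) \<subseteq> verts K"
        using conn \<phi>_verts[OF v] unfolding connected_set_def by auto
      fix a b assume "a \<in> \<Union>(\<psi> ` \<phi> v)" "b \<in> \<Union>(\<psi> ` \<phi> v)"
      then obtain u w where uw: "u \<in> \<phi> v" "w \<in> \<phi> v" "a \<in> \<psi> u" "b \<in> \<psi> w" by blast
      have "(u, w) \<in> (adj G \<inter> \<phi> v \<times> \<phi> v)\<^sup>*" using \<phi>(1) v uw unfolding connected_set_def by blast
      from branch_sets_path[where \<psi> = \<psi> and S = "\<phi> v", OF conn edge this uw(1)] uw(3,4)
      show "(a, b) \<in> (adj K \<inter> \<Union>(\<psi> ` \<phi> v) \<times> \<Union>(\<psi> ` \<phi> v))\<^sup>*" by blast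
    qed
  next
    fix u v assume "u \<in> verts H" "v \<in> verts H" "u \<noteq> v"
    then show "\<Union>(\<psi> ` \<phi> u) \<inter> \<Union>(\<psi> ` \<phi> v) = {}"
      using \<phi>(2) \<psi>(2) \<phi>_verts by (smt (verit) UN_E disjoint_iff subsetD)
  next
    fix u v assume "{u, v} \<in> edges H"
    then show "\<exists>x\<in>\<Union>(\<psi> ` \<phi> u). \<exists>y\<in>\<Union>(\<psi> ` \<phi> v). {x, y} \<in> edges K"
      using \<phi>(3) \<psi>(3) by blast
  qed
qed

lemma contract_edge_minor:
  assumes wf: "wf_graph H" and xy: "{x, y} \<in> edges H"
  shows "minor (contract_edge H x y) H"
proof (rule minorI[where \<phi> = "\<lambda>v. if v = x then {x, y} else {v}"])
  have x_y: "x \<in> verts H" "y \<in> verts H" "x \<noteq> y" using wf_graph_edgeD[OF wf xy] by auto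
  have "connected_set H {x, y}"
    unfolding connected_set_def
  proof (intro conjI ballI)
    fix a b assume "a \<in> {x, y}" "b \<in> {x, y}"
    moreover have "(x, y) \<in> adj H \<inter> {x, y} \<times> {x, y}" "(y, x) \<in> adj H \<inter> {x, y} \<times> {x, y}"
      using xy by (auto simp: adj_def insert_commute)
    ultimately show "(a, b) \<in> (adj H \<inter> {x, y} \<times> {x, y})\<^sup>*" by auto
  qed (use x_y in auto)
  then show "connected_set H (if v = x then {x, y} else {v})" if "v \<in> verts (contract_edge H x y)" for v
    using that by (auto simp: contract_edge_verts intro: connected_set_singleton)
next
  fix u v assume "u \<in> verts (contract_edge H x y)" "v \<in> verts (contract_edge H x y)" "u \<noteq> v"
  then show "(if u = x then {x, y} else {u}) \<inter> (if v = x then {x, y} else {v}) = {}"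
    by (auto simp: contract_edge_verts)
next
  fix u v assume "{u, v} \<in> edges (contract_edge H x y)"
  then consider "{u, v} \<in> edges H" | w where "{u, v} = {x, w}" "{y, w} \<in> edges H"
    unfolding contract_edge_edges by blast
  then show "\<exists>a\<in>(if u = x then {x, y} else {u}). \<exists>b\<in>(if v = x then {x, y} else {v}). {a, b} \<in> edges H"
  proof cases
    case 2
    then have "u = x \<and> v = w \<or> u = w \<and> v = x" by (auto simp: doubleton_eq_iff)
    then show ?thesis using 2(2) by (auto simp: insert_commute)
  qed auto
qed

lemma minor_complete_graph_card_verts:
  assumes "wf_graph A"
  shows "minor A (complete_graph (card (verts A)))"
proof -
  obtain f where f: "bij_betw f (verts A) {0..<card (verts A)}"
    using ex_bij_betw_finite_nat[OF wf_graph_finite_verts[OF assms]] by blast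
  then have inj: "inj_on f (verts A)" and range: "\<And>v. v \<in> verts A \<Longrightarrow> f v < card (verts A)"
    by (auto simp: bij_betw_def)
  show ?thesis
  proof (rule minorI[where \<phi> = "\<lambda>v. {f v}"])
    fix u v assume "{u, v} \<in> edges A"
    then have "u \<in> verts A" "v \<in> verts A" "u \<noteq> v" using wf_graph_edgeD[OF assms] by auto
    then show "\<exists>x\<in>{f u}. \<exists>y\<in>{f v}. {x, y} \<in> edges (complete_graph (card (verts A)))"
      using inj range by (auto simp: complete_graph_edge_iff inj_on_def)
  qed (use inj range in \<open>auto simp: complete_graph_verts inj_on_def intro: connected_set_singleton\<close>)
qed

lemma card_edges_le_contract_edge:
  assumes wf: "wf_graph H" and xy: "{x, y} \<in> edges H"
  shows "card (edges H)
    \<le> card (edges (contract_edge H x y)) + 1 + card (neighbours H x \<inter> neighbours H y)"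
proof -
  define A where "A = {e \<in> edges H. y \<notin> e}"
  define W where "W = neighbours H y - {x} - neighbours H x"
  have fin: "finite (neighbours H x)" "finite (neighbours H y)" "finite (edges H)"
    using finite_neighbours[OF wf] wf_graph_finite_edges[OF wf] by auto
  have "edges H = A \<union> {e \<in> edges H. y \<in> e}" by (auto simp: A_def)
  then have "card (edges H) \<le> card A + card {e \<in> edges H. y \<in> e}"
    by (metis card_Un_le)
  also have "card {e \<in> edges H. y \<in> e} = card (neighbours H y)"
    using card_neighbours_eq_card_incident[OF wf] by simp
  also have "\<dots> \<le> card ({x} \<union> (neighbours H x \<inter> neighbours H y) \<union> W)"
    using fin by (intro card_mono) (auto simp: W_def)
  also have "\<dots> \<le> card ({x} \<union> (neighbours H x \<inter> neighbours H y)) + card W"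
    by (rule card_Un_le)
  also have "\<dots> \<le> 1 + card (neighbours H x \<inter> neighbours H y) + card W"
    using card_Un_le[of "{x}" "neighbours H x \<inter> neighbours H y"] by simp
  also have "card A + (1 + card (neighbours H x \<inter> neighbours H y) + card W)
      = card (A \<union> (\<lambda>w. {x, w}) ` W) + 1 + card (neighbours H x \<inter> neighbours H y)"
  proof -
    have "inj_on (\<lambda>w. {x, w}) W" by (auto simp: inj_on_def doubleton_eq_iff W_def)
    moreover have "A \<inter> (\<lambda>w. {x, w}) ` W = {}" by (auto simp: A_def W_def neighbours_def)
    ultimately show ?thesis
      using fin by (simp add: card_Un_disjoint card_image A_def W_def)
  qed
  also have "card (A \<union> (\<lambda>w. {x, w}) ` W) \<le> card (edges (contract_edge H x y))"
    using wf_graph_finite_edges[OF contract_edge_wf[OF wf xy]]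
    by (intro card_mono) (auto simp: A_def W_def neighbours_def contract_edge_edges)
  finally show ?thesis by simp
qed

text \<open>Contracting \<open>xy\<close> loses one vertex but at most \<open>1 + |N(x) \<inter> N(y)|\<close> edges.\<close>
lemma contract_edge_dense:
  assumes wf: "wf_graph H" and xy: "{x, y} \<in> edges H"
    and few: "card (neighbours H x \<inter> neighbours H y) < d"
    and dense: "d * card (verts H) \<le> card (edges H)"
  shows "d * card (verts (contract_edge H x y)) \<le> card (edges (contract_edge H x y))"
proof -
  have "card (verts (contract_edge H x y)) = card (verts H) - 1"
    using wf_graph_edgeD[OF wf xy] wf_graph_finite_verts[OF wf] by (simp add: contract_edge_verts)
  then have "d * card (verts (contract_edge H x y)) = d * card (verts H) - d"
    by (simp add: diff_mult_distrib2)
  then show ?thesis using card_edges_le_contract_edge[OF wf xy] few dense by linarith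
qed

lemma dense_neighbourhood:
  assumes wf: "wf_graph H"
    and common: "\<And>y. y \<in> neighbours H x \<Longrightarrow> 2 * d \<le> card (neighbours H x \<inter> neighbours H y)"
  shows "d * card (neighbours H x) \<le> card (edges (induced_subgraph H (neighbours H x)))"
proof -
  let ?N = "induced_subgraph H (neighbours H x)"
  have wf_N: "wf_graph ?N" using induced_subgraph_wf[OF wf neighbours_subset[OF wf]] .
  have "2 * (d * card (neighbours H x)) = (\<Sum>y\<in>neighbours H x. 2 * d)" by simp
  also have "\<dots> \<le> (\<Sum>y\<in>neighbours H x. card (neighbours ?N y))"
    using common by (intro sum_mono) (simp add: neighbours_induced_subgraph Int_commute)
  also have "\<dots> = 2 * card (edges ?N)"
    using handshake[OF wf_N] by (simp add: induced_subgraph_def verts_def)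
  finally show ?thesis by simp
qed

lemma complete_graph_minor_cone:
  assumes wf: "wf_graph H" and x: "x \<in> verts H"
    and minor: "minor (complete_graph r) (induced_subgraph H (neighbours H x))"
  shows "minor (complete_graph (Suc r)) H"
proof -
  let ?S = "neighbours H x"
  obtain \<phi> where \<phi>: "\<forall>v\<in>verts (complete_graph r). connected_set (induced_subgraph H ?S) (\<phi> v)"
    "\<forall>u\<in>verts (complete_graph r). \<forall>v\<in>verts (complete_graph r). u \<noteq> v \<longrightarrow> \<phi> u \<inter> \<phi> v = {}"
    "\<forall>u v. {u, v} \<in> edges (complete_graph r) \<longrightarrow>
       (\<exists>a\<in>\<phi> u. \<exists>b\<in>\<phi> v. {a, b} \<in> edges (induced_subgraph H ?S))"
    using minor unfolding minor_def by blast
  have conn: "connected_set H (\<phi> i)" and sub: "\<phi> i \<subseteq> ?S" "\<phi> i \<noteq> {}" if "i < r" for i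
  proof -
    have "connected_set (induced_subgraph H ?S) (\<phi> i)" using \<phi>(1) that by (simp add: complete_graph_verts)
    then show "\<phi> i \<subseteq> ?S" "\<phi> i \<noteq> {}"
      by (auto simp: connected_set_def induced_subgraph_def verts_def)
    then show "connected_set H (\<phi> i)"
      using neighbours_subset[OF wf] connected_set_mono_graph[OF \<open>connected_set _ (\<phi> i)\<close>]
        adj_induced_subgraph_subset by blast
  qed
  have x_notin: "x \<notin> \<phi> i" if "i < r" for i
    using sub[OF that] not_in_neighbours[OF wf] by blast
  have x_adj: "\<exists>a\<in>\<phi> i. {x, a} \<in> edges H \<and> {a, x} \<in> edges H" if "i < r" for i
    using sub[OF that] by (auto simp: neighbours_def insert_commute)
  show ?thesis
  proof (rule minorI[where \<phi> = "\<phi>(r := {x})"])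
    fix v assume "v \<in> verts (complete_graph (Suc r))"
    then show "connected_set H ((\<phi>(r := {x})) v)"
      using conn x by (auto simp: complete_graph_verts intro: connected_set_singleton)
  next
    fix u v assume "u \<in> verts (complete_graph (Suc r))" "v \<in> verts (complete_graph (Suc r))" "u \<noteq> v"
    then show "(\<phi>(r := {x})) u \<inter> (\<phi>(r := {x})) v = {}"
      using \<phi>(2) x_notin by (auto simp: complete_graph_verts)
  next
    fix u v assume "{u, v} \<in> edges (complete_graph (Suc r))"
    then have "u < Suc r" "v < Suc r" "u \<noteq> v" by (auto simp: complete_graph_edge_iff)
    then consider "u = r" "v < r" | "v = r" "u < r" | "u < r" "v < r" "{u, v} \<in> edges (complete_graph r)"
      by (metis complete_graph_edge_iff less_SucE)
    then show "\<exists>a\<in>(\<phi>(r := {x})) u. \<exists>b\<in>(\<phi>(r := {x})) v. {a, b} \<in> edges H"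
    proof cases
      case 3
      then show ?thesis using \<phi>(3) by (fastforce simp: induced_subgraph_def edges_def)
    qed (use x_adj in auto)
  qed
qed

text \<open>Either some edge \<open>xy\<close> lies in few triangles and can be
  contracted without losing density, or the neighbourhood of a vertex \<open>x\<close> is itself dense
  enough to contain \<open>K\<^sub>r\<close>, which together with \<open>x\<close> forms \<open>K\<^sub>r\<^sub>+\<^sub>1\<close>.\<close>
lemma complete_graph_minor_if_dense:
  assumes "wf_graph H" "edges H \<noteq> {}" "2 ^ r * card (verts H) \<le> card (edges H)"
  shows "minor (complete_graph r) H"
  using assms
proof (induction r arbitrary: H)
  case 0
  show ?case by (rule minorI) (auto simp: complete_graph_verts complete_graph_edge_iff)
next
  case (Suc r)
  from Suc.prems show ?case
  proof (induction "card (verts H)" arbitrary: H rule: less_induct)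
    case less
    note wf = less.prems(1)
    obtain x y0 where "{x, y0} \<in> edges H"
      using less.prems(2) wf_graph_edgeE[OF wf] by (metis ex_in_conv)
    then have x: "x \<in> verts H" and y0: "y0 \<in> neighbours H x"
      using wf_graph_edgeD[OF wf] by (auto simp: neighbours_def)
    show ?case
    proof (cases "\<exists>y\<in>neighbours H x. card (neighbours H x \<inter> neighbours H y) < 2 ^ Suc r")
      case True
      then obtain y where xy: "{x, y} \<in> edges H"
        and few: "card (neighbours H x \<inter> neighbours H y) < 2 ^ Suc r"
        by (auto simp: neighbours_def)
      let ?H = "contract_edge H x y"
      have dense: "2 ^ Suc r * card (verts ?H) \<le> card (edges ?H)"
        using contract_edge_dense[OF wf xy few less.prems(3)] .
      have "x \<in> verts ?H" using x wf_graph_edgeD[OF wf xy] by (simp add: contract_edge_verts)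
      then have "0 < card (verts ?H)"
        using wf_graph_finite_verts[OF contract_edge_wf[OF wf xy]] card_gt_0_iff by blast
      then have "edges ?H \<noteq> {}" using dense by (intro notI) simp
      moreover have "card (verts ?H) < card (verts H)"
        using wf_graph_edgeD[OF wf xy] wf_graph_finite_verts[OF wf]
        unfolding contract_edge_verts by (intro card_Diff1_less)
      ultimately have "minor (complete_graph (Suc r)) ?H"
        using less.hyps contract_edge_wf[OF wf xy] dense by blast
      then show ?thesis using minor_trans contract_edge_minor[OF wf xy] by blast
    next
      case False
      let ?N = "induced_subgraph H (neighbours H x)"
      have "2 ^ r * card (neighbours H x) \<le> card (edges ?N)"
        using False by (intro dense_neighbourhood[OF wf]) (auto simp: not_less)
      moreover have "0 < card (neighbours H x)"
        using y0 finite_neighbours[OF wf] card_gt_0_iff by blast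
      ultimately have "edges ?N \<noteq> {}" by (intro notI) simp
      with \<open>2 ^ r * card (neighbours H x) \<le> card (edges ?N)\<close> have "minor (complete_graph r) ?N"
        using Suc.IH induced_subgraph_wf[OF wf neighbours_subset[OF wf]]
        by (simp add: induced_subgraph_def verts_def)
      then show ?thesis using complete_graph_minor_cone[OF wf x] by blast
    qed
  qed
qed

definition minor_sparse :: "nat \<Rightarrow> graph \<Rightarrow> bool" where
  "minor_sparse c H \<longleftrightarrow> (\<forall>F. wf_graph F \<and> minor F H \<longrightarrow> card (edges F) \<le> c * card (verts F))"

definition clique :: "graph \<Rightarrow> nat set \<Rightarrow> bool" where
  "clique H S \<longleftrightarrow> S \<subseteq> verts H \<and> (\<forall>a\<in>S. \<forall>b\<in>S. a \<noteq> b \<longrightarrow> {a, b} \<in> edges H)"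

lemma minor_sparse_minor: "minor_sparse c H \<Longrightarrow> minor H' H \<Longrightarrow> minor_sparse c H'"
  unfolding minor_sparse_def using minor_trans by blast

lemma minor_sparseD: "minor_sparse c H \<Longrightarrow> wf_graph H \<Longrightarrow> card (edges H) \<le> c * card (verts H)"
  unfolding minor_sparse_def using minor_refl by blast

lemma minor_sparse_if_excluded_minor:
  assumes "wf_graph A" "wf_graph G" "\<not> minor A G"
  shows "minor_sparse (2 ^ card (verts A)) G"
  unfolding minor_sparse_def
proof (intro allI impI)
  fix F assume F: "wf_graph F \<and> minor F G"
  show "card (edges F) \<le> 2 ^ card (verts A) * card (verts F)"
  proof (rule ccontr)
    assume "\<not> ?thesis"
    then have "minor (complete_graph (card (verts A))) F"
      using F by (intro complete_graph_minor_if_dense) auto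
    then have "minor A G"
      using minor_complete_graph_card_verts[OF assms(1)] F minor_trans by blast
    then show False using assms(3) by blast
  qed
qed

lemma low_degree_vertex:
  assumes wf: "wf_graph H" and sparse: "minor_sparse c H" and "verts H \<noteq> {}"
  obtains v where "v \<in> verts H" "card (neighbours H v) \<le> 2 * c"
proof (rule ccontr)
  assume "\<not> thesis"
  then have "\<And>v. v \<in> verts H \<Longrightarrow> 2 * c + 1 \<le> card (neighbours H v)"
    using that by force
  then have "(\<Sum>v\<in>verts H. 2 * c + 1) \<le> 2 * card (edges H)"
    using sum_mono handshake[OF wf] by metis
  also have "\<dots> \<le> 2 * (c * card (verts H))" using minor_sparseD[OF sparse wf] by simp
  finally have "(2 * c + 1) * card (verts H) \<le> 2 * c * card (verts H)" by simp
  moreover have "0 < card (verts H)"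
    using wf_graph_finite_verts[OF wf] \<open>verts H \<noteq> {}\<close> by (simp add: card_gt_0_iff)
  ultimately show False by simp
qed

text \<open>Every clique either avoids a vertex \<open>v\<close> of degree at most \<open>2c\<close> or lies in its closed
  neighbourhood.\<close>
lemma card_cliques_le:
  assumes "wf_graph H" "minor_sparse c H"
  shows "card {S. clique H S} \<le> 2 ^ (2 * c + 1) * card (verts H) + 1"
  using assms
proof (induction "card (verts H)" arbitrary: H)
  case 0
  then have "verts H = {}" using wf_graph_finite_verts by simp
  then have "{S. clique H S} = {{}}" by (auto simp: clique_def)
  then show ?case by simp
next
  case (Suc n)
  note wf = Suc.prems(1)
  obtain v where v: "v \<in> verts H" "card (neighbours H v) \<le> 2 * c"
    using low_degree_vertex[OF wf Suc.prems(2)] Suc.hyps(2) by force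
  let ?H = "induced_subgraph H (verts H - {v})"
  have wf': "wf_graph ?H" using induced_subgraph_wf[OF wf] by blast
  have n: "n = card (verts ?H)"
    using Suc.hyps(2) v wf_graph_finite_verts[OF wf] by (simp add: induced_subgraph_def verts_def)
  have IH: "card {S. clique ?H S} \<le> 2 ^ (2 * c + 1) * n + 1"
    using Suc.hyps(1)[OF n wf'] n minor_sparse_minor[OF Suc.prems(2) induced_subgraph_minor] by auto
  have "{S. clique H S} \<subseteq> {S. clique ?H S} \<union> Pow (insert v (neighbours H v))"
    by (auto simp: clique_def induced_subgraph_def verts_def edges_def neighbours_def)
  moreover have "finite {S. clique ?H S}"
    using wf_graph_finite_verts[OF wf'] by (auto simp: clique_def intro: finite_subset[of _ "Pow _"])
  moreover have "finite (Pow (insert v (neighbours H v)))" using finite_neighbours[OF wf] by simp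
  ultimately have "card {S. clique H S}
      \<le> card {S. clique ?H S} + card (Pow (insert v (neighbours H v)))"
    by (meson card_Un_le card_mono finite_UnI le_trans)
  also have "card (Pow (insert v (neighbours H v))) \<le> 2 ^ (2 * c + 1)"
  proof -
    have "card (insert v (neighbours H v)) \<le> 2 * c + 1"
      using v(2) finite_neighbours[OF wf] not_in_neighbours[OF wf] by simp
    then have "2 ^ card (insert v (neighbours H v)) \<le> (2::nat) ^ (2 * c + 1)"
      by (rule power_increasing) simp
    then show ?thesis using finite_neighbours[OF wf] by (simp add: card_Pow)
  qed
  finally have "card {S. clique H S} \<le> card {S. clique ?H S} + 2 ^ (2 * c + 1)" by simp
  moreover have "2 ^ (2 * c + 1) * card (verts H) = 2 ^ (2 * c + 1) * n + 2 ^ (2 * c + 1)"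
    using Suc.hyps(2)[symmetric] by simp
  ultimately show ?case using IH by linarith
qed

lemma neighbours_contract_edge_nonadjacent:
  assumes "r' \<noteq> r" "r' \<noteq> a" "{r', r} \<notin> edges H"
  shows "neighbours (contract_edge H a r) r' = neighbours H r'"
  using assms by (auto simp: neighbours_def contract_edge_edges doubleton_eq_iff insert_commute)

lemma card_attached_verts_le:
  assumes "wf_graph H" "minor_sparse c H" "X \<inter> R = {}" "verts H = X \<union> R"
    and "\<forall>r\<in>R. neighbours H r \<subseteq> X" "inj_on (neighbours H) R"
  shows "card R + card {e \<in> edges H. e \<subseteq> X} \<le> c * card X + (2 ^ (2 * c + 1) * card X + 1)"
  using assms
proof (induction "card R" arbitrary: H R rule: less_induct)
  case less
  note wf = less.prems(1) and sparse = less.prems(2) and XR = less.prems(3) and V = less.prems(4)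
    and nb_X = less.prems(5) and inj = less.prems(6)
  have fin: "finite X" "finite R" using wf_graph_finite_verts[OF wf] V by auto
  show ?case
  proof (cases "\<exists>r\<in>R. \<exists>a\<in>neighbours H r. \<exists>b\<in>neighbours H r. a \<noteq> b \<and> {a, b} \<notin> edges H")
    case True
    then obtain r a b where r: "r \<in> R" "a \<in> neighbours H r" "b \<in> neighbours H r" "a \<noteq> b"
      "{a, b} \<notin> edges H" by blast
    have ab: "a \<in> X" "b \<in> X" and "r \<notin> X" using nb_X XR r by auto
    have ar: "{a, r} \<in> edges H" using r(2) by (simp add: neighbours_def insert_commute)
    let ?H = "contract_edge H a r"
    have nb_eq: "neighbours ?H r' = neighbours H r'" if "r' \<in> R - {r}" for r'
    proof (rule neighbours_contract_edge_nonadjacent)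
      show "r' \<noteq> r" "r' \<noteq> a" using that XR ab by auto
      show "{r', r} \<notin> edges H" using that nb_X \<open>r \<notin> X\<close> by (auto simp: neighbours_def)
    qed
    have "card (R - {r}) + card {e \<in> edges ?H. e \<subseteq> X}
        \<le> c * card X + (2 ^ (2 * c + 1) * card X + 1)"
    proof (rule less.hyps)
      show "card (R - {r}) < card R" by (rule card_Diff1_less[OF fin(2) r(1)])
      show "inj_on (neighbours ?H) (R - {r})" using inj nb_eq by (simp add: inj_on_def)
      show "wf_graph ?H" by (rule contract_edge_wf[OF wf ar])
      show "minor_sparse c ?H" by (rule minor_sparse_minor[OF sparse contract_edge_minor[OF wf ar]])
      show "X \<inter> (R - {r}) = {}" using XR by blast
      show "verts ?H = X \<union> (R - {r})" using V \<open>r \<notin> X\<close> by (auto simp: contract_edge_verts)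
      show "\<forall>r'\<in>R - {r}. neighbours ?H r' \<subseteq> X" using nb_X nb_eq by simp
    qed
    moreover have "card {e \<in> edges H. e \<subseteq> X} + 1 \<le> card {e \<in> edges ?H. e \<subseteq> X}"
    proof -
      have "insert {a, b} {e \<in> edges H. e \<subseteq> X} \<subseteq> {e \<in> edges ?H. e \<subseteq> X}"
        using r(3,4) ab \<open>r \<notin> X\<close> by (auto simp: contract_edge_edges neighbours_def)
      then have "card (insert {a, b} {e \<in> edges H. e \<subseteq> X}) \<le> card {e \<in> edges ?H. e \<subseteq> X}"
        using wf_graph_finite_edges[OF contract_edge_wf[OF wf ar]] by (intro card_mono) auto
      moreover have "card (insert {a, b} {e \<in> edges H. e \<subseteq> X}) = card {e \<in> edges H. e \<subseteq> X} + 1"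
        using r(5) wf_graph_finite_edges[OF wf] by simp
      ultimately show ?thesis by simp
    qed
    moreover have "card R = card (R - {r}) + 1"
      using card_Suc_Diff1[OF fin(2) r(1)] by simp
    ultimately show ?thesis by linarith
  next
    case False
    let ?F = "induced_subgraph H X"
    have XV: "X \<subseteq> verts H" using V by blast
    have wf_F: "wf_graph ?F" and sparse_F: "minor_sparse c ?F"
      using induced_subgraph_wf[OF wf XV] minor_sparse_minor[OF sparse induced_subgraph_minor[OF XV]] .
    have cliques: "neighbours H ` R \<subseteq> {S. clique ?F S}"
      using False nb_X by (auto simp: clique_def induced_subgraph_def verts_def edges_def)
    have "finite {S. clique ?F S}"
      using fin by (auto simp: clique_def induced_subgraph_def verts_def intro: finite_subset[of _ "Pow X"])
    from card_mono[OF this cliques] have "card R \<le> card {S. clique ?F S}" by (simp add: card_image[OF inj])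
    also have "\<dots> \<le> 2 ^ (2 * c + 1) * card X + 1"
      using card_cliques_le[OF wf_F sparse_F] by (simp add: induced_subgraph_def verts_def)
    finally show ?thesis
      using minor_sparseD[OF sparse_F wf_F] by (simp add: induced_subgraph_def verts_def edges_def)
  qed
qed

definition component :: "graph \<Rightarrow> nat set \<Rightarrow> nat \<Rightarrow> nat set" where
  "component G X u = {v. (u, v) \<in> (adj (delete_verts G X))\<^sup>*}"

lemma adj_delete_verts_iff: "(u, v) \<in> adj (delete_verts G X) \<longleftrightarrow> {u, v} \<in> edges G \<and> u \<notin> X \<and> v \<notin> X"
  by (auto simp: adj_def delete_verts_def edges_def)

lemma cc_delete_verts: "cc (delete_verts G X) = component G X ` (verts G - X)"
  by (auto simp: cc_def component_def delete_verts_def verts_def)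

lemma component_self: "u \<in> component G X u"
  by (simp add: component_def)

lemma component_subset:
  assumes wf: "wf_graph G" and u: "u \<in> verts G - X"
  shows "component G X u \<subseteq> verts G - X"
proof
  fix v assume "v \<in> component G X u"
  then have "(u, v) \<in> (adj (delete_verts G X))\<^sup>*" by (simp add: component_def)
  then show "v \<in> verts G - X"
    by (induction rule: rtrancl_induct) (use u wf_graph_edgeD[OF wf] in \<open>auto simp: adj_delete_verts_iff\<close>)
qed

lemma component_eq:
  assumes "v \<in> component G X u"
  shows "component G X v = component G X u"
proof -
  have uv: "(u, v) \<in> (adj (delete_verts G X))\<^sup>*" using assms by (simp add: component_def)
  then have "(v, u) \<in> (adj (delete_verts G X))\<^sup>*" using sym_adj sym_rtrancl symD by metis
  with uv show ?thesis unfolding component_def by (auto intro: rtrancl_trans)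
qed

lemma connected_set_component:
  assumes wf: "wf_graph G" and u: "u \<in> verts G - X"
  shows "connected_set G (component G X u)"
proof -
  let ?C = "component G X u"
  let ?T = "adj G \<inter> ?C \<times> ?C"
  have path: "(u, b) \<in> ?T\<^sup>*" if "b \<in> ?C" for b
  proof -
    from that have "(u, b) \<in> (adj (delete_verts G X))\<^sup>*" by (simp add: component_def)
    then show ?thesis
    proof (induction rule: rtrancl_induct)
      case (step w z)
      then have "w \<in> ?C" "z \<in> ?C" by (auto simp: component_def intro: rtrancl_into_rtrancl)
      moreover have "(w, z) \<in> adj G"
        using step.hyps(2) unfolding adj_delete_verts_iff by (simp add: adj_def)
      ultimately show ?case using step.IH by (meson IntI SigmaI rtrancl.rtrancl_into_rtrancl)
    qed simp
  qed
  have "sym ?T" using sym_adj by (auto simp: sym_def)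
  then have "(a, b) \<in> ?T\<^sup>*" if "a \<in> ?C" "b \<in> ?C" for a b
    using path[OF that(1)] path[OF that(2)] by (meson rtrancl_trans sym_rtrancl symD)
  then show ?thesis
    using component_self[of u G X] component_subset[OF wf u] by (auto simp: connected_set_def)
qed

lemma nbh_component_subset:
  assumes wf: "wf_graph G" and u: "u \<in> verts G - X"
  shows "nbh G (component G X u) \<subseteq> X"
proof
  fix v assume "v \<in> nbh G (component G X u)"
  then obtain c where c: "c \<in> component G X u" "{c, v} \<in> edges G" "v \<notin> component G X u"
    by (auto simp: nbh_def)
  have "c \<notin> X" using component_subset[OF wf u] c(1) by blast
  show "v \<in> X"
  proof (rule ccontr)
    assume "v \<notin> X"
    then have "(c, v) \<in> adj (delete_verts G X)" using c(2) \<open>c \<notin> X\<close> by (simp add: adj_delete_verts_iff)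
    then have "v \<in> component G X u" using c(1) by (auto simp: component_def intro: rtrancl_into_rtrancl)
    then show False using c(3) by blast
  qed
qed

text \<open>Contract the component of each \<open>r \<in> R\<close> onto \<open>r\<close> and delete the rest of \<open>G - X\<close>; this is a
  minor of \<open>G\<close> when \<open>R\<close> meets each component of \<open>G - X\<close> at most once.\<close>
definition component_graph :: "graph \<Rightarrow> nat set \<Rightarrow> nat set \<Rightarrow> graph" where
  "component_graph G X R =
     (X \<union> R, {e \<in> edges G. e \<subseteq> X} \<union> {{x, r} | x r. r \<in> R \<and> x \<in> nbh G (component G X r)})"

lemma component_graph_verts: "verts (component_graph G X R) = X \<union> R"
  by (simp add: component_graph_def verts_def)

lemma component_graph_edges:
  "edges (component_graph G X R) =
     {e \<in> edges G. e \<subseteq> X} \<union> {{x, r} | x r. r \<in> R \<and> x \<in> nbh G (component G X r)}"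
  by (simp add: component_graph_def edges_def)

context
  fixes G X R
  assumes wf: "wf_graph G" and X: "X \<subseteq> verts G" and R: "R \<subseteq> verts G - X"
begin

private lemma mem_nbh_component: "r \<in> R \<Longrightarrow> x \<in> nbh G (component G X r) \<Longrightarrow> x \<in> X \<and> x \<noteq> r"
  using nbh_component_subset[OF wf] R by blast

lemma component_graph_wf: "wf_graph (component_graph G X R)"
proof -
  have "finite (X \<union> R)" using X R wf_graph_finite_verts[OF wf] by (meson Diff_subset finite_Un rev_finite_subset)
  moreover have "e \<subseteq> X \<union> R \<and> card e = 2" if "e \<in> edges (component_graph G X R)" for e
    using that wf mem_nbh_component by (auto simp: component_graph_edges wf_graph_def)
  ultimately show ?thesis by (simp add: wf_graph_def component_graph_verts)
qed

lemma neighbours_component_graph: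
  assumes "r \<in> R"
  shows "neighbours (component_graph G X R) r = nbh G (component G X r)"
proof
  show "neighbours (component_graph G X R) r \<subseteq> nbh G (component G X r)"
  proof
    fix w assume "w \<in> neighbours (component_graph G X R) r"
    then consider "{r, w} \<subseteq> X" | x r' where "{r, w} = {x, r'}" "r' \<in> R" "x \<in> nbh G (component G X r')"
      by (auto simp: neighbours_def component_graph_edges)
    then show "w \<in> nbh G (component G X r)"
    proof cases
      case 1
      then show ?thesis using assms R by blast
    next
      case 2
      then have "r = r' \<and> w = x" using assms R mem_nbh_component by (auto simp: doubleton_eq_iff)
      then show ?thesis using 2 by simp
    qed
  qed
  show "nbh G (component G X r) \<subseteq> neighbours (component_graph G X R) r"
    using assms by (auto simp: neighbours_def component_graph_edges insert_commute)
qed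

lemma component_graph_minor:
  assumes inj: "inj_on (component G X) R"
  shows "minor (component_graph G X R) G"
proof (rule minorI[where \<phi> = "\<lambda>v. if v \<in> X then {v} else component G X v"])
  fix v assume "v \<in> verts (component_graph G X R)"
  then show "connected_set G (if v \<in> X then {v} else component G X v)"
    using X R connected_set_component[OF wf]
    by (auto simp: component_graph_verts intro: connected_set_singleton)
next
  have outside: "component G X r \<inter> X = {}" if "r \<in> R" for r
    using component_subset[OF wf] R that by blast
  have disjoint: "component G X r \<inter> component G X r' = {}" if "r \<in> R" "r' \<in> R" "r \<noteq> r'" for r r'
  proof (rule ccontr)
    assume "component G X r \<inter> component G X r' \<noteq> {}"
    then obtain z where "z \<in> component G X r" "z \<in> component G X r'" by blast
    then have "component G X r = component G X r'" using component_eq by metis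
    then show False using inj that by (auto simp: inj_on_def)
  qed
  fix u v assume "u \<in> verts (component_graph G X R)" "v \<in> verts (component_graph G X R)" "u \<noteq> v"
  then show "(if u \<in> X then {u} else component G X u) \<inter> (if v \<in> X then {v} else component G X v) = {}"
    using outside disjoint[of u v] by (auto simp: component_graph_verts)
next
  fix u v assume "{u, v} \<in> edges (component_graph G X R)"
  then consider "{u, v} \<in> edges G" "{u, v} \<subseteq> X"
    | x r where "{u, v} = {x, r}" "r \<in> R" "x \<in> nbh G (component G X r)"
    by (auto simp: component_graph_edges)
  then show "\<exists>a\<in>(if u \<in> X then {u} else component G X u).
      \<exists>b\<in>(if v \<in> X then {v} else component G X v). {a, b} \<in> edges G"
  proof cases
    case 2
    then have "x \<in> X" "r \<notin> X" using mem_nbh_component R by auto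
    moreover obtain c where "c \<in> component G X r" "{c, x} \<in> edges G" "{x, c} \<in> edges G"
      using 2(3) by (auto simp: nbh_def insert_commute)
    moreover have "u = x \<and> v = r \<or> u = r \<and> v = x" using 2(1) by (auto simp: doubleton_eq_iff)
    ultimately show ?thesis by auto
  qed auto
qed

end

lemma card_component_neighbourhoods_le:
  assumes wf: "wf_graph G" and sparse: "minor_sparse c G" and X: "X \<subseteq> verts G"
  shows "card {nbh G C | C. C \<in> cc (delete_verts G X)} \<le> c * card X + (2 ^ (2 * c + 1) * card X + 1)"
proof -
  define Q where "Q u = nbh G (component G X u)" for u
  obtain R where R: "R \<subseteq> verts G - X" and inj: "inj_on Q R" and QR: "Q ` (verts G - X) = Q ` R"
    using subset_image_inj[of "Q ` (verts G - X)" Q "verts G - X", THEN iffD1, OF subset_refl] by auto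
  have "{nbh G C | C. C \<in> cc (delete_verts G X)} = Q ` (verts G - X)"
    by (auto simp: cc_delete_verts Q_def)
  then have "card {nbh G C | C. C \<in> cc (delete_verts G X)} = card R"
    using card_image[OF inj] QR by simp
  also have "\<dots> \<le> card R + card {e \<in> edges (component_graph G X R). e \<subseteq> X}" by simp
  also have "\<dots> \<le> c * card X + (2 ^ (2 * c + 1) * card X + 1)"
  proof (rule card_attached_verts_le)
    have "inj_on (component G X) R" using inj by (auto simp: inj_on_def Q_def)
    then show "minor_sparse c (component_graph G X R)"
      using minor_sparse_minor[OF sparse component_graph_minor[OF wf X R]] by blast
    show "wf_graph (component_graph G X R)" using component_graph_wf[OF wf X R] .
    show "X \<inter> R = {}" "verts (component_graph G X R) = X \<union> R"
      using R by (auto simp: component_graph_verts)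
    show "\<forall>r\<in>R. neighbours (component_graph G X R) r \<subseteq> X"
    proof
      fix r assume "r \<in> R"
      then show "neighbours (component_graph G X R) r \<subseteq> X"
        using R neighbours_component_graph[OF wf X R] nbh_component_subset[OF wf, of r X] by auto
    qed
    show "inj_on (neighbours (component_graph G X R)) R"
      using inj neighbours_component_graph[OF wf X R] by (simp add: inj_on_def Q_def)
  qed
  finally show ?thesis .
qed

theorem corollary2p3:
  fixes \<C> :: "graph set"
  assumes "apex_minor_free \<C>"
  shows "\<exists>\<nu>::real. \<nu> > 0 \<and>
    (\<forall>G\<in>\<C>. \<forall>X. X \<noteq> {} \<and> X \<subseteq> verts G \<longrightarrow>
       real (card {nbh G C | C. C \<in> cc (delete_verts G X)}) \<le> \<nu> * real (card X))"
proof -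
  obtain A where A: "wf_graph A" "\<forall>G\<in>\<C>. \<not> minor A G" and wf: "\<forall>G\<in>\<C>. wf_graph G"
    using assms unfolding apex_minor_free_def by blast
  define c where "c = (2::nat) ^ card (verts A)"
  have "0 < real (c + 2 ^ (2 * c + 1) + 1)" by (simp only: of_nat_0_less_iff)
  moreover have "real (card {nbh G C | C. C \<in> cc (delete_verts G X)}) \<le> real (c + 2 ^ (2 * c + 1) + 1) * real (card X)"
    if "G \<in> \<C>" "X \<noteq> {}" "X \<subseteq> verts G" for G X
  proof -
    have "minor_sparse c G" unfolding c_def using A wf that by (intro minor_sparse_if_excluded_minor) auto
    then have "card {nbh G C | C. C \<in> cc (delete_verts G X)} \<le> c * card X + (2 ^ (2 * c + 1) * card X + 1)"
      using card_component_neighbourhoods_le wf that by blast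
    moreover have "finite X" using that wf wf_graph_finite_verts finite_subset by blast
    then have "1 \<le> card X" using \<open>X \<noteq> {}\<close> by (simp add: Suc_le_eq card_gt_0_iff)
    ultimately have "card {nbh G C | C. C \<in> cc (delete_verts G X)} \<le> (c + 2 ^ (2 * c + 1) + 1) * card X"
      unfolding distrib_right by linarith
    then show ?thesis by (simp only: of_nat_mult[symmetric] of_nat_le_iff)
  qed
  ultimately show ?thesis by blast
qed

end
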